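(* Let $f(x,y)=\alpha+\beta x+\gamma y$, where $\alpha,\beta,\gamma$ are positive real numbers with $\alpha\le1$ and $2\beta>\gamma$. For every $\epsilon>0$ there is $\nu_0(\epsilon)$ such that, for all integers $\nu\ge\nu_0(\epsilon)$ and $\mu$ with $$2\nu\le\mu<2\gamma(2\beta-\gamma)\nu^2+(2\alpha-\gamma-1)\nu-\frac{(2-2\alpha+\gamma)^2}{8\gamma(2\beta-\gamma)}-\epsilon,$$ we have $f(x,y)\ge\frac{\mu}{\nu}$ for every $(x,y)\in\Omega:=\{(x,y)\in\mathbb{R}^2: x>0,\ y\ge0,\ x(\tfrac12x+\tfrac12+y)+\nu\ge\mu\}$. *)

theory Defs
  imports Complex_Main
begin

end

theory Submission
  imports Defs
begin

text \<open>Put \<open>a = \<alpha> - \<gamma>/2\<close>, \<open>P = \<beta> - \<gamma>/2\<close>, \<open>K = 4 \<gamma> P = 2\<gamma>(2\<beta> - \<gamma>)\<close> and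
  \<open>C = (1 - a)\<^sup>2 / K\<close>. Eliminating \<open>y\<close> with the constraint of \<open>\<Omega>\<close> gives
  \<open>f(x,y) \<ge> a + P x + \<gamma> (\<mu> - \<nu>)/x \<ge> a + sqrt (K (\<mu> - \<nu>))\<close> by AM-GM, so it suffices
  that \<open>(\<mu> - a\<nu>)\<^sup>2 \<le> K \<nu>\<^sup>2 (\<mu> - \<nu>)\<close>. This is a monic quadratic inequality in \<open>\<mu>\<close>,
  so by convexity it suffices to check it at both ends of the admissible range. At \<open>\<mu> = 2\<nu>\<close>
  it holds once \<open>K\<nu> \<ge> (2 - a)\<^sup>2\<close>; at \<open>\<mu> = K\<nu>\<^sup>2 + (2a - 1)\<nu> - C - \<epsilon>\<close> the constant \<open>C\<close>
  is exactly what cancels the \<open>\<nu>\<^sup>2\<close>-terms, leaving \<open>-K\<epsilon>\<nu>\<^sup>2 + O(\<nu>)\<close>.\<close>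

lemma monic_quadratic_nonpos_between:
  fixes p q x b c :: real
  assumes "p \<le> x" "x \<le> q" "p\<^sup>2 + b * p + c \<le> 0" "q\<^sup>2 + b * q + c \<le> 0"
  shows "x\<^sup>2 + b * x + c \<le> 0"
proof (cases "p = q")
  case True
  then show ?thesis using assms by auto
next
  case False
  then have qp: "q - p > 0" using assms by auto
  have "(q - p) * (x\<^sup>2 + b * x + c)
      = (q - x) * (p\<^sup>2 + b * p + c) + (x - p) * (q\<^sup>2 + b * q + c) + (q - p) * ((x - p) * (x - q))"
    by (simp add: algebra_simps power2_eq_square)
  also have "\<dots> \<le> 0"
  proof -
    have "(q - x) * (p\<^sup>2 + b * p + c) \<le> 0" "(x - p) * (q\<^sup>2 + b * q + c) \<le> 0"
      using assms by (simp_all add: mult_nonneg_nonpos)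
    moreover have "(q - p) * ((x - p) * (x - q)) \<le> 0"
      using assms qp by (intro mult_nonneg_nonpos) (auto simp: mult_nonneg_nonpos)
    ultimately show ?thesis by linarith
  qed
  finally show ?thesis using qp by (simp add: mult_le_0_iff)
qed

lemma le_linear_plus_reciprocal:
  fixes p q s x :: real
  assumes "p > 0" "x > 0" "s\<^sup>2 \<le> 4 * p * q"
  shows "s \<le> p * x + q / x"
proof -
  have "4 * p * (p * x\<^sup>2 - s * x + q) = (2 * p * x - s)\<^sup>2 + (4 * p * q - s\<^sup>2)"
    by (simp add: algebra_simps power2_eq_square)
  also have "\<dots> \<ge> 0" using assms by simp
  finally have "p * x\<^sup>2 - s * x + q \<ge> 0"
    using \<open>p > 0\<close> by (simp add: zero_le_mult_iff)
  then show ?thesis using \<open>x > 0\<close> by (simp add: field_simps power2_eq_square)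
qed

lemma objective_ge_on_constraint:
  fixes \<alpha> \<beta> \<gamma> n m x y :: real
  assumes "\<gamma> \<ge> 0" "x > 0" "x * (x / 2 + 1 / 2 + y) + n \<ge> m"
  shows "\<alpha> + \<beta> * x + \<gamma> * y \<ge> (\<alpha> - \<gamma> / 2) + (\<beta> - \<gamma> / 2) * x + \<gamma> * (m - n) / x"
proof -
  have "y \<ge> (m - n) / x - x / 2 - 1 / 2"
    using assms by (simp add: field_simps)
  then have "\<gamma> * y \<ge> \<gamma> * ((m - n) / x - x / 2 - 1 / 2)"
    using \<open>\<gamma> \<ge> 0\<close> by (rule mult_left_mono)
  then show ?thesis by (simp add: algebra_simps)
qed

lemma objective_ge_ratio:
  fixes \<alpha> \<beta> \<gamma> n m x y :: real
  assumes "\<gamma> > 0" "2 * \<beta> > \<gamma>" "n > 0" "x > 0"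
    and constraint: "x * (x / 2 + 1 / 2 + y) + n \<ge> m"
    and square_le: "(m - (\<alpha> - \<gamma> / 2) * n)\<^sup>2 \<le> 2 * \<gamma> * (2 * \<beta> - \<gamma>) * n\<^sup>2 * (m - n)"
  shows "\<alpha> + \<beta> * x + \<gamma> * y \<ge> m / n"
proof -
  define s where "s = m / n - (\<alpha> - \<gamma> / 2)"
  have "n\<^sup>2 * s\<^sup>2 = (m - (\<alpha> - \<gamma> / 2) * n)\<^sup>2"
    using \<open>n > 0\<close> unfolding s_def by (simp add: field_simps power2_eq_square)
  also have "\<dots> \<le> n\<^sup>2 * (4 * (\<beta> - \<gamma> / 2) * (\<gamma> * (m - n)))"
    using square_le by (simp add: algebra_simps)
  finally have "s\<^sup>2 \<le> 4 * (\<beta> - \<gamma> / 2) * (\<gamma> * (m - n))"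
    using \<open>n > 0\<close> by simp
  then have "s \<le> (\<beta> - \<gamma> / 2) * x + \<gamma> * (m - n) / x"
    using assms by (intro le_linear_plus_reciprocal) auto
  moreover have "\<alpha> + \<beta> * x + \<gamma> * y \<ge> (\<alpha> - \<gamma> / 2) + (\<beta> - \<gamma> / 2) * x + \<gamma> * (m - n) / x"
    using assms by (intro objective_ge_on_constraint) auto
  ultimately show ?thesis unfolding s_def by simp
qed

lemma square_le_in_range:
  fixes K a \<epsilon> n m :: real
  assumes "K > 0" "n \<ge> 1" "(2 - a)\<^sup>2 \<le> K * n"
    and large: "2 * (1 - a) * ((1 - a)\<^sup>2 / K + \<epsilon>) * n + ((1 - a)\<^sup>2 / K + \<epsilon>)\<^sup>2 < K * \<epsilon> * n\<^sup>2"
    and lower: "2 * n \<le> m"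
    and upper: "m < K * n\<^sup>2 + (2 * a - 1) * n - (1 - a)\<^sup>2 / K - \<epsilon>"
  shows "(m - a * n)\<^sup>2 \<le> K * n\<^sup>2 * (m - n)"
proof -
  define C where "C = (1 - a)\<^sup>2 / K"
  define M where "M = K * n\<^sup>2 + (2 * a - 1) * n - C - \<epsilon>"
  define b where "b = - 2 * a * n - K * n\<^sup>2"
  define c where "c = a\<^sup>2 * n\<^sup>2 + K * n ^ 3"
  have quadratic: "z\<^sup>2 + b * z + c = (z - a * n)\<^sup>2 - K * n\<^sup>2 * (z - n)" for z
    unfolding b_def c_def by (simp add: algebra_simps power2_eq_square power3_eq_cube)
  have "K * C * n\<^sup>2 = (1 - a)\<^sup>2 * n\<^sup>2"
    unfolding C_def using \<open>K > 0\<close> by simp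
  moreover have "M\<^sup>2 + b * M + c
      = (1 - a)\<^sup>2 * n\<^sup>2 - K * C * n\<^sup>2 - K * \<epsilon> * n\<^sup>2 + 2 * (1 - a) * (C + \<epsilon>) * n + (C + \<epsilon>)\<^sup>2"
    unfolding quadratic M_def by (simp add: algebra_simps power2_eq_square)
  ultimately have at_upper: "M\<^sup>2 + b * M + c \<le> 0"
    using large unfolding C_def by linarith
  have "(2 - a)\<^sup>2 * n\<^sup>2 \<le> K * n * n\<^sup>2"
    using assms by (intro mult_right_mono) auto
  then have at_lower: "(2 * n)\<^sup>2 + b * (2 * n) + c \<le> 0"
    unfolding quadratic by (simp add: algebra_simps power2_eq_square)
  have "m\<^sup>2 + b * m + c \<le> 0"
    using monic_quadratic_nonpos_between[OF lower _ at_lower at_upper] upper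
    unfolding M_def C_def by linarith
  then show ?thesis unfolding quadratic by simp
qed

lemma ex_threshold_for_square_le_in_range:
  fixes K a \<epsilon> :: real
  assumes "K > 0" "\<epsilon> > 0"
  shows "\<exists>N. \<forall>n \<ge> N. n \<ge> 1 \<and> (2 - a)\<^sup>2 \<le> K * n \<and>
    2 * (1 - a) * ((1 - a)\<^sup>2 / K + \<epsilon>) * n + ((1 - a)\<^sup>2 / K + \<epsilon>)\<^sup>2 < K * \<epsilon> * n\<^sup>2"
proof -
  define B where "B = (1 - a)\<^sup>2 / K + \<epsilon>"
  define X where "X = 2 * (1 - a) * B + B\<^sup>2"
  show ?thesis
    unfolding B_def[symmetric]
  proof (intro exI[of _ "max 1 (max ((2 - a)\<^sup>2 / K) ((X + 1) / (K * \<epsilon>)))"] allI impI conjI)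
    fix n :: real
    assume n: "max 1 (max ((2 - a)\<^sup>2 / K) ((X + 1) / (K * \<epsilon>))) \<le> n"
    then show "n \<ge> 1" by simp
    show "(2 - a)\<^sup>2 \<le> K * n"
      using n \<open>K > 0\<close> by (simp add: field_simps)
    have "X + 1 \<le> K * \<epsilon> * n"
      using n assms by (simp add: field_simps)
    then have "(X + 1) * n \<le> K * \<epsilon> * n * n"
      using n by (intro mult_right_mono) auto
    moreover have "(X + 1) * n = 2 * (1 - a) * B * n + B\<^sup>2 * n + n"
      unfolding X_def by (simp add: algebra_simps)
    moreover have "B\<^sup>2 \<le> B\<^sup>2 * n"
      using n by (simp add: mult_le_cancel_left1)
    ultimately show "2 * (1 - a) * B * n + B\<^sup>2 < K * \<epsilon> * n\<^sup>2"
      using n by (simp add: power2_eq_square)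
  qed
qed

theorem lemma4p3:
  fixes \<alpha> \<beta> \<gamma> :: real
  assumes "\<alpha> > 0" "\<beta> > 0" "\<gamma> > 0" "\<alpha> \<le> 1" "2 * \<beta> > \<gamma>"
  shows "\<forall>\<epsilon>::real. \<epsilon> > 0 \<longrightarrow>
    (\<exists>\<nu>0::int. \<forall>\<nu> \<mu> :: int. \<nu> \<ge> \<nu>0 \<longrightarrow>
       2 * \<nu> \<le> \<mu> \<longrightarrow>
       real_of_int \<mu> < 2 * \<gamma> * (2 * \<beta> - \<gamma>) * (real_of_int \<nu>)^2
           + (2 * \<alpha> - \<gamma> - 1) * real_of_int \<nu>
           - (2 - 2 * \<alpha> + \<gamma>)^2 / (8 * \<gamma> * (2 * \<beta> - \<gamma>)) - \<epsilon> \<longrightarrow>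
       (\<forall>x y :: real. x > 0 \<longrightarrow> y \<ge> 0 \<longrightarrow>
          x * (x / 2 + 1 / 2 + y) + real_of_int \<nu> \<ge> real_of_int \<mu> \<longrightarrow>
          \<alpha> + \<beta> * x + \<gamma> * y \<ge> real_of_int \<mu> / real_of_int \<nu>))"
proof (intro allI impI)
  fix \<epsilon> :: real
  assume "\<epsilon> > 0"
  define K where "K = 2 * \<gamma> * (2 * \<beta> - \<gamma>)"
  define a where "a = \<alpha> - \<gamma> / 2"
  have "K > 0"
    using assms unfolding K_def by auto
  have C: "(2 - 2 * \<alpha> + \<gamma>)\<^sup>2 / (8 * \<gamma> * (2 * \<beta> - \<gamma>)) = (1 - a)\<^sup>2 / K"
    unfolding K_def a_def by (simp add: field_simps power2_eq_square)
  obtain N where N: "\<And>n. n \<ge> N \<Longrightarrow> n \<ge> 1 \<and> (2 - a)\<^sup>2 \<le> K * n \<and>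
      2 * (1 - a) * ((1 - a)\<^sup>2 / K + \<epsilon>) * n + ((1 - a)\<^sup>2 / K + \<epsilon>)\<^sup>2 < K * \<epsilon> * n\<^sup>2"
    using ex_threshold_for_square_le_in_range[OF \<open>K > 0\<close> \<open>\<epsilon> > 0\<close>] by blast
  show "\<exists>\<nu>0::int. \<forall>\<nu> \<mu> :: int. \<nu> \<ge> \<nu>0 \<longrightarrow>
       2 * \<nu> \<le> \<mu> \<longrightarrow>
       real_of_int \<mu> < 2 * \<gamma> * (2 * \<beta> - \<gamma>) * (real_of_int \<nu>)^2
           + (2 * \<alpha> - \<gamma> - 1) * real_of_int \<nu>
           - (2 - 2 * \<alpha> + \<gamma>)^2 / (8 * \<gamma> * (2 * \<beta> - \<gamma>)) - \<epsilon> \<longrightarrow>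
       (\<forall>x y :: real. x > 0 \<longrightarrow> y \<ge> 0 \<longrightarrow>
          x * (x / 2 + 1 / 2 + y) + real_of_int \<nu> \<ge> real_of_int \<mu> \<longrightarrow>
          \<alpha> + \<beta> * x + \<gamma> * y \<ge> real_of_int \<mu> / real_of_int \<nu>)"
  proof (intro exI[of _ "\<lceil>N\<rceil>"] allI impI)
    fix \<nu> \<mu> :: int and x y :: real
    assume "\<nu> \<ge> \<lceil>N\<rceil>" "2 * \<nu> \<le> \<mu>"
      and upper: "real_of_int \<mu> < 2 * \<gamma> * (2 * \<beta> - \<gamma>) * (real_of_int \<nu>)\<^sup>2
           + (2 * \<alpha> - \<gamma> - 1) * real_of_int \<nu>
           - (2 - 2 * \<alpha> + \<gamma>)\<^sup>2 / (8 * \<gamma> * (2 * \<beta> - \<gamma>)) - \<epsilon>"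
      and "x > 0" and constraint: "x * (x / 2 + 1 / 2 + y) + real_of_int \<nu> \<ge> real_of_int \<mu>"
    define n m where "n = real_of_int \<nu>" and "m = real_of_int \<mu>"
    have "n \<ge> N" "2 * n \<le> m"
      using \<open>\<nu> \<ge> \<lceil>N\<rceil>\<close> \<open>2 * \<nu> \<le> \<mu>\<close> unfolding n_def m_def by linarith+
    with N have large: "n \<ge> 1" "(2 - a)\<^sup>2 \<le> K * n"
        "2 * (1 - a) * ((1 - a)\<^sup>2 / K + \<epsilon>) * n + ((1 - a)\<^sup>2 / K + \<epsilon>)\<^sup>2 < K * \<epsilon> * n\<^sup>2"
      by auto
    have "2 * \<alpha> - \<gamma> - 1 = 2 * a - 1"
      unfolding a_def by simp
    then have "m < K * n\<^sup>2 + (2 * a - 1) * n - (1 - a)\<^sup>2 / K - \<epsilon>"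
      using upper unfolding C K_def n_def m_def by simp
    then have "(m - a * n)\<^sup>2 \<le> K * n\<^sup>2 * (m - n)"
      using large \<open>2 * n \<le> m\<close> by (intro square_le_in_range[OF \<open>K > 0\<close>])
    then show "\<alpha> + \<beta> * x + \<gamma> * y \<ge> m / n"
      using objective_ge_ratio assms large \<open>x > 0\<close> constraint
      unfolding K_def a_def n_def m_def by auto
  qed
qed

end
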